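(* For every integer $k>4$, \[\overline{\alpha}(\{1,4,k\})=\begin{cases}\frac{2k}{5k+5} & k\equiv 0\pmod 5,\\ \frac25 & k\equiv 1\pmod 5,\\ \frac{2k+1}{5k+5} & k\equiv 2\pmod 5,\\ \frac{2k-1}{5k+5} & k\equiv 3\pmod 5,\\ \frac25 & k\equiv 4\pmod 5.\end{cases}\]
   Context: For a finite set $S$ of positive integers, the distance graph $G(S)$ has vertex set $\mathbb{Z}$, with $i,j$ adjacent iff $|i-j|\in S$. The density of $A\subseteq\mathbb{Z}$ is $\delta(A)=\limsup_{N\to\infty}\frac{|A\cap[-N,N]|}{2N+1}$, and the independence ratio $\overline{\alpha}(S)$ is the supremum of $\delta(A)$ over independent sets $A$ of $G(S)$. *)

theory Defs
  imports "HOL-Analysis.Analysis" "HOL-Library.Liminf_Limsup"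
begin

definition dist_adj :: "nat set \<Rightarrow> int \<Rightarrow> int \<Rightarrow> bool" where
  "dist_adj S i j \<longleftrightarrow> nat \<bar>i - j\<bar> \<in> S"

definition independent_set :: "nat set \<Rightarrow> int set \<Rightarrow> bool" where
  "independent_set S A \<longleftrightarrow> (\<forall>i\<in>A. \<forall>j\<in>A. \<not> dist_adj S i j)"

definition upper_density :: "int set \<Rightarrow> ereal" where
  "upper_density A =
     limsup (\<lambda>N::nat. ereal (real (card (A \<inter> {-int N..int N})) / real (2 * N + 1)))"

definition indep_ratio :: "nat set \<Rightarrow> ereal" where
  "indep_ratio S = (SUP A \<in> {A. independent_set S A}. upper_density A)"

end

theory Submission
  imports Defs "HOL-Real_Asymp.Real_Asymp"
begin

text \<open>A set without differences 1 and 4 meets five consecutive integers in at most two points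
  (they form a 5-cycle), and a window of length \<open>5 j + 1\<close> in at most \<open>2 j + 1\<close> points,
  with equality only if both ends lie in the set. Forbidding also the difference \<open>k = 5 m + r\<close>,
  every element of an independent set starts a window of length \<open>k + 1\<close> (for \<open>r = 3\<close>
  possibly \<open>k + 4\<close>) carrying at most the claimed proportion of points; chaining such windows
  bounds the upper density. Conversely, periodic sets of period \<open>k + 1\<close> built from the
  pattern \<open>10010\<close>, respectively the residues \<open>{0, 2}\<close> modulo 5 when \<open>k \<equiv> \<plusminus>1\<close>,
  are independent and attain these bounds.\<close>

lemma independent_set_iff:
  "independent_set S A \<longleftrightarrow> (\<forall>x\<in>A. \<forall>d\<in>S. x + int d \<notin> A)"
proof
  assume "independent_set S A"
  then show "\<forall>x\<in>A. \<forall>d\<in>S. x + int d \<notin> A"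
    unfolding independent_set_def dist_adj_def by force
next
  assume no_diff: "\<forall>x\<in>A. \<forall>d\<in>S. x + int d \<notin> A"
  show "independent_set S A"
    unfolding independent_set_def dist_adj_def
  proof (intro ballI notI)
    fix i j assume ij: "i \<in> A" "j \<in> A" "nat \<bar>i - j\<bar> \<in> S"
    show False
    proof (cases "j \<le> i")
      case True
      then have "i = j + int (nat \<bar>i - j\<bar>)" by simp
      then show False using no_diff ij by metis
    next
      case False
      then have "j = i + int (nat \<bar>i - j\<bar>)" by simp
      then show False using no_diff ij by metis
    qed
  qed
qed

lemma independent_setD:
  "independent_set S A \<Longrightarrow> x \<in> A \<Longrightarrow> d \<in> S \<Longrightarrow> x + int d \<notin> A"
  by (simp add: independent_set_iff)

lemma independent_set_subset:
  "independent_set T A \<Longrightarrow> S \<subseteq> T \<Longrightarrow> independent_set S A"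
  by (auto simp: independent_set_iff)

lemma independent_set_periodic:
  fixes p :: int
  assumes "p > 0" "\<And>r d. r \<in> B \<Longrightarrow> d \<in> S \<Longrightarrow> (r + int d) mod p \<notin> B"
  shows "independent_set S {x. x mod p \<in> B}"
  unfolding independent_set_iff
  using assms(2) by (metis mem_Collect_eq mod_add_left_eq)

section \<open>Upper density\<close>

lemma upper_density_le:
  fixes \<rho> C :: real
  assumes "\<And>N. real (card (A \<inter> {-int N..int N})) \<le> \<rho> * real (2 * N + 1) + C"
  shows "upper_density A \<le> \<rho>"
proof -
  have pointwise: "real (card (A \<inter> {-int N..int N})) / real (2 * N + 1) \<le> \<rho> + C / real (2 * N + 1)" for N
    using divide_right_mono[OF assms[of N], of "real (2 * N + 1)"] by (simp add: add_divide_distrib)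
  have "upper_density A \<le> limsup (\<lambda>N. ereal (\<rho> + C / real (2 * N + 1)))"
    unfolding upper_density_def using pointwise by (intro Limsup_mono) simp
  also have "\<dots> = \<rho>"
  proof (rule lim_imp_Limsup)
    have "(\<lambda>N. \<rho> + C / real (2 * N + 1)) \<longlonglongrightarrow> \<rho>"
      by real_asymp
    then show "(\<lambda>N. ereal (\<rho> + C / real (2 * N + 1))) \<longlonglongrightarrow> ereal \<rho>"
      by (simp add: tendsto_ereal)
  qed simp
  finally show ?thesis .
qed

lemma upper_density_ge:
  fixes \<rho> C :: real
  assumes "\<And>N. \<rho> * real (2 * N + 1) - C \<le> real (card (A \<inter> {-int N..int N}))"
  shows "\<rho> \<le> upper_density A"
proof -
  have pointwise: "\<rho> - C / real (2 * N + 1) \<le> real (card (A \<inter> {-int N..int N})) / real (2 * N + 1)" for N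
    using divide_right_mono[OF assms[of N], of "real (2 * N + 1)"] by (simp add: diff_divide_distrib)
  have "ereal \<rho> = limsup (\<lambda>N. ereal (\<rho> - C / real (2 * N + 1)))"
  proof (rule lim_imp_Limsup[symmetric])
    have "(\<lambda>N. \<rho> - C / real (2 * N + 1)) \<longlonglongrightarrow> \<rho>"
      by real_asymp
    then show "(\<lambda>N. ereal (\<rho> - C / real (2 * N + 1))) \<longlonglongrightarrow> ereal \<rho>"
      by (simp add: tendsto_ereal)
  qed simp
  also have "\<dots> \<le> upper_density A"
    unfolding upper_density_def using pointwise by (intro Limsup_mono) simp
  finally show ?thesis .
qed

lemma card_Int_split:
  fixes a b c :: int
  assumes "a \<le> b" "b \<le> c"
  shows "card (A \<inter> {a..<c}) = card (A \<inter> {a..<b}) + card (A \<inter> {b..<c})"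
proof -
  have "A \<inter> {a..<c} = (A \<inter> {a..<b}) \<union> (A \<inter> {b..<c})" using assms by auto
  then show ?thesis by (simp add: card_Un_disjoint ivl_disj_int_two(3) Int_Un_distrib disjoint_iff)
qed

lemma card_window_le_by_chunks:
  fixes \<rho> :: real
  assumes chunk: "\<And>a. a \<in> A \<Longrightarrow> \<exists>b>a. real (card (A \<inter> {a..<b})) \<le> \<rho> * of_int (b - a)
                                     \<and> card (A \<inter> {a..<b}) \<le> T"
    and "\<rho> \<ge> 0"
  shows "real (card (A \<inter> {a..<a + int n})) \<le> \<rho> * n + T"
proof (induction n arbitrary: a rule: less_induct)
  case (less n)
  show ?case
  proof (cases "A \<inter> {a..<a + int n} = {}")
    case True
    then show ?thesis using \<open>\<rho> \<ge> 0\<close> by simp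
  next
    case False
    define a0 where "a0 = Min (A \<inter> {a..<a + int n})"
    have a0: "a0 \<in> A" "a \<le> a0" "a0 < a + int n"
      using Min_in[OF _ False] unfolding a0_def by auto
    have before_a0: "A \<inter> {a..<a0} = {}"
      using Min_le[of "A \<inter> {a..<a + int n}"] a0(3) unfolding a0_def by fastforce
    obtain b where b: "b > a0" "real (card (A \<inter> {a0..<b})) \<le> \<rho> * of_int (b - a0)"
      "card (A \<inter> {a0..<b}) \<le> T"
      using chunk[OF a0(1)] by blast
    have "card (A \<inter> {a..<a + int n}) = card (A \<inter> {a0..<a + int n})"
      using card_Int_split[OF a0(2), of "a + int n" A] a0(3) before_a0 by simp
    also have "real \<dots> \<le> \<rho> * n + T"
    proof (cases "a + int n \<le> b")
      case True
      then have "card (A \<inter> {a0..<a + int n}) \<le> card (A \<inter> {a0..<b})"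
        by (intro card_mono) auto
      moreover have "0 \<le> \<rho> * n" using \<open>\<rho> \<ge> 0\<close> by simp
      ultimately show ?thesis
        using b(3) by linarith
    next
      case False
      define n' where "n' = nat (a + int n - b)"
      have n': "n' < n" "b + int n' = a + int n"
        using False a0 b(1) unfolding n'_def by auto
      have "card (A \<inter> {a0..<a + int n}) = card (A \<inter> {a0..<b}) + card (A \<inter> {b..<b + int n'})"
        using card_Int_split[of a0 b "a + int n" A] n'(2) False b(1) by simp
      then have "real (card (A \<inter> {a0..<a + int n})) \<le> \<rho> * of_int (b - a0) + (\<rho> * n' + T)"
        using b(2) less[OF n'(1), of b] by linarith
      also have "\<dots> = \<rho> * (real_of_int (b - a0) + real n') + T"
        by (simp add: distrib_left)
      also have "\<dots> \<le> \<rho> * n + T"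
      proof -
        have "real_of_int (b - a0) + real n' \<le> real n"
          using n'(2) a0(2) by linarith
        then show ?thesis
          using \<open>\<rho> \<ge> 0\<close> by (simp add: mult_left_mono)
      qed
      finally show ?thesis .
    qed
    finally show ?thesis .
  qed
qed

lemma upper_density_le_by_chunks:
  fixes \<rho> :: real
  assumes "\<And>a. a \<in> A \<Longrightarrow> \<exists>b>a. real (card (A \<inter> {a..<b})) \<le> \<rho> * of_int (b - a)
                                \<and> card (A \<inter> {a..<b}) \<le> T"
    and "\<rho> \<ge> 0"
  shows "upper_density A \<le> \<rho>"
proof (rule upper_density_le)
  fix N
  have "{-int N..int N} = {-int N..<-int N + int (2 * N + 1)}" by auto
  then show "real (card (A \<inter> {-int N..int N})) \<le> \<rho> * real (2 * N + 1) + T"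
    using card_window_le_by_chunks[OF assms, of "-int N" "2 * N + 1"] by simp
qed

lemma card_periodic_window:
  fixes p :: int
  assumes "p > 0" "B \<subseteq> {0..<p}"
  shows "card ({x. x mod p \<in> B} \<inter> {a..<a + p}) = card B"
proof -
  have "bij_betw (\<lambda>x. x mod p) ({x. x mod p \<in> B} \<inter> {a..<a + p}) B"
  proof (rule bij_betwI[where g = "\<lambda>r. a + (r - a) mod p"])
    fix x assume "x \<in> {x. x mod p \<in> B} \<inter> {a..<a + p}"
    then have "(x - a) mod p = x - a" by simp
    then show "a + (x mod p - a) mod p = x" by (simp add: mod_diff_left_eq)
  qed (use assms in \<open>auto simp: mod_add_right_eq\<close>)
  then show ?thesis by (rule bij_betw_same_card)
qed

lemma card_periodic_windows:
  fixes p :: int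
  assumes "p > 0" "B \<subseteq> {0..<p}"
  shows "card ({x. x mod p \<in> B} \<inter> {a..<a + int n * p}) = n * card B"
proof (induction n)
  case (Suc n)
  have "card ({x. x mod p \<in> B} \<inter> {a..<a + int (Suc n) * p})
        = card ({x. x mod p \<in> B} \<inter> {a..<a + int n * p})
          + card ({x. x mod p \<in> B} \<inter> {a + int n * p..<a + int n * p + p})"
    using card_Int_split[of a "a + int n * p" "a + int n * p + p"] assms(1) by (simp add: algebra_simps)
  then show ?case
    using Suc card_periodic_window[OF assms, of "a + int n * p"] by simp
qed simp

lemma upper_density_periodic_ge:
  fixes p :: int
  assumes "p > 0" "B \<subseteq> {0..<p}"
  shows "real (card B) / p \<le> upper_density {x. x mod p \<in> B}"
proof (rule upper_density_ge[where C = "card B"])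
  fix N
  define q where "q = nat ((2 * int N + 1) div p)"
  have "int q * p + (2 * int N + 1) mod p = 2 * int N + 1"
    using assms(1) by (simp add: q_def pos_imp_zdiv_nonneg_iff)
  moreover have "0 \<le> (2 * int N + 1) mod p" "(2 * int N + 1) mod p < p"
    using assms(1) by simp_all
  ultimately have q: "int q * p \<le> 2 * int N + 1" "2 * int N + 1 < (int q + 1) * p"
    unfolding distrib_right by linarith+
  have "{x. x mod p \<in> B} \<inter> {-int N..<-int N + int q * p} \<subseteq> {x. x mod p \<in> B} \<inter> {-int N..int N}"
    using q(1) by auto
  then have "q * card B \<le> card ({x. x mod p \<in> B} \<inter> {-int N..int N})"
    using card_periodic_windows[OF assms, of "-int N" q] by (metis card_mono finite_Int finite_atLeastAtMost_int)
  then have "real q * card B \<le> card ({x. x mod p \<in> B} \<inter> {-int N..int N})"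
    by (metis of_nat_mono of_nat_mult)
  moreover have "real (2 * N + 1) < (real q + 1) * p"
  proof -
    have "real_of_int (2 * int N + 1) < real_of_int ((int q + 1) * p)"
      using q(2) by (simp only: of_int_less_iff)
    then show ?thesis by simp
  qed
  then have "real (2 * N + 1) / p \<le> real q + 1"
    using assms(1) by (simp add: divide_le_eq)
  then have "real (card B) * (real (2 * N + 1) / p) \<le> real (card B) * (real q + 1)"
    by (rule mult_left_mono) simp
  moreover have "real (card B) * (real (2 * N + 1) / p) = real (card B) / p * real (2 * N + 1)"
    "real (card B) * (real q + 1) = real q * card B + card B"
    by (simp_all add: algebra_simps add_divide_distrib)
  ultimately show "real (card B) / p * real (2 * N + 1) - card B \<le> real (card ({x. x mod p \<in> B} \<inter> {-int N..int N}))"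
    by linarith
qed

section \<open>Sets without differences 1 and 4\<close>

lemma card_Int_window_eq_sum:
  "card (A \<inter> {a..<a + int n}) = (\<Sum>i<n. indicator A (a + int i))"
proof -
  have "{a..<a + int n} = (\<lambda>i. a + int i) ` {..<n}"
    by (auto simp: image_iff intro!: bexI[where x = "nat (x - a)" for x])
  then have "(\<Sum>x\<in>{a..<a + int n}. indicator A x) = (\<Sum>i<n. indicator A (a + int i) :: nat)"
    by (simp only:) (rule sum.reindex_cong[OF _ refl refl], simp add: inj_on_def)
  then show ?thesis
    by (simp add: sum_indicator_eq_card Int_commute)
qed

lemma card_window5_eq:
  fixes a :: int
  shows "card (A \<inter> {a..<a + 5}) = indicator A a + indicator A (a + 1) + indicator A (a + 2)
     + indicator A (a + 3) + indicator A (a + 4)"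
  using card_Int_window_eq_sum[of A a 5] by (simp add: eval_nat_numeral lessThan_Suc add_ac)

lemma indicator_pair_le_if_independent:
  assumes "independent_set S A" "d \<in> S"
  shows "indicator A x + indicator A (x + int d) \<le> (1::nat)"
  using independent_setD[OF assms(1) _ assms(2), of x] by (cases "x \<in> A") (auto simp: indicator_def)

lemma card_window5_le:
  assumes "independent_set {1, 4} A"
  shows "card (A \<inter> {a..<a + 5}) \<le> 2"
proof -
  note pair = indicator_pair_le_if_independent[OF assms]
  have "indicator A a + indicator A (a + 1) \<le> (1::nat)"
    "indicator A (a + 1) + indicator A (a + 2) \<le> (1::nat)"
    "indicator A (a + 2) + indicator A (a + 3) \<le> (1::nat)"
    "indicator A (a + 3) + indicator A (a + 4) \<le> (1::nat)"
    "indicator A a + indicator A (a + 4) \<le> (1::nat)"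
    using pair[of 1 a] pair[of 1 "a + 1"] pair[of 1 "a + 2"] pair[of 1 "a + 3"] pair[of 4 a]
    by (simp_all add: add.assoc)
  then show ?thesis
    unfolding card_window5_eq by linarith
qed

lemma card_windows5_le:
  assumes "independent_set {1, 4} A"
  shows "card (A \<inter> {a..<a + 5 * int j}) \<le> 2 * j"
proof (induction j)
  case (Suc j)
  have "card (A \<inter> {a..<a + 5 * int (Suc j)})
        = card (A \<inter> {a..<a + 5 * int j}) + card (A \<inter> {a + 5 * int j..<a + 5 * int j + 5})"
    using card_Int_split[of a "a + 5 * int j" "a + 5 * int j + 5" A] by (simp add: algebra_simps)
  then show ?case
    using Suc card_window5_le[OF assms, of "a + 5 * int j"] by simp
qed simp

lemma card_window_5j1_le:
  assumes "independent_set {1, 4} A"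
  shows "card (A \<inter> {a..<a + 5 * int j + 1}) \<le> 2 * j + of_bool (a \<in> A \<and> a + 5 * int j \<in> A)"
proof (induction j)
  case 0
  show ?case using card_Int_window_eq_sum[of A a 1] by (simp add: indicator_def)
next
  case (Suc j)
  let ?b = "a + 5 * int j + 1"
  have split: "card (A \<inter> {a..<a + 5 * int (Suc j) + 1}) = card (A \<inter> {a..<?b}) + card (A \<inter> {?b..<?b + 5})"
    using card_Int_split[of a ?b "?b + 5" A] by (simp add: algebra_simps)
  show ?case
  proof (cases "a \<in> A \<and> a + 5 * int j \<in> A")
    case True
    then have "indicator A ?b = (0::nat)" "indicator A (?b + 3) = (0::nat)"
      using independent_setD[OF assms True[THEN conjunct2], of 1]
        independent_setD[OF assms True[THEN conjunct2], of 4] by (simp_all add: add.assoc)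
    moreover have "indicator A (?b + 1) + indicator A (?b + 2) \<le> (1::nat)"
      using indicator_pair_le_if_independent[OF assms, of 1 "?b + 1"] by (simp add: add.assoc)
    moreover have end_eq: "?b + 4 = a + 5 * int (Suc j)" by simp
    ultimately have "card (A \<inter> {?b..<?b + 5}) \<le> 1 + indicator A (a + 5 * int (Suc j))"
      unfolding card_window5_eq end_eq by linarith
    then show ?thesis
      using Suc.IH split True by (simp add: indicator_def)
  next
    case False
    then have "card (A \<inter> {a..<?b}) \<le> 2 * j"
      using Suc.IH by (simp only: of_bool_eq(1) add_0_right)
    then show ?thesis
      using split card_window5_le[OF assms, of ?b] by simp
  qed
qed

lemma card_window_5j1_le_Suc:
  assumes "independent_set {1, 4} A"
  shows "card (A \<inter> {a..<a + 5 * int j + 1}) \<le> 2 * j + 1"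
  using card_window_5j1_le[OF assms, of a j] by (cases "a \<in> A \<and> a + 5 * int j \<in> A") simp_all

section \<open>Upper bounds on the density\<close>

lemma upper_density_le_two_fifths:
  assumes "independent_set {1, 4} A"
  shows "upper_density A \<le> ereal (2 / 5)"
proof (rule upper_density_le_by_chunks[where T = 2])
  fix a
  show "\<exists>b>a. real (card (A \<inter> {a..<b})) \<le> 2 / 5 * of_int (b - a) \<and> card (A \<inter> {a..<b}) \<le> 2"
    using card_window5_le[OF assms, of a] by (intro exI[of _ "a + 5"]) simp
qed simp

lemma upper_density_le_mod0:
  assumes A: "independent_set {1, 4, 5 * m} A"
  shows "upper_density A \<le> ereal (2 * real m / (5 * real m + 1))"
proof (rule upper_density_le_by_chunks[where T = "2 * m"])
  fix a assume "a \<in> A"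
  then have "a + 5 * int m \<notin> A"
    using independent_setD[OF A, of a "5 * m"] by simp
  then have "card (A \<inter> {a..<a + 5 * int m + 1}) \<le> 2 * m"
    using card_window_5j1_le[OF independent_set_subset[OF A], of a m] by simp
  then show "\<exists>b>a. real (card (A \<inter> {a..<b})) \<le> 2 * real m / (5 * real m + 1) * of_int (b - a)
                   \<and> card (A \<inter> {a..<b}) \<le> 2 * m"
    by (intro exI[of _ "a + 5 * int m + 1"]) simp
qed simp

lemma upper_density_le_mod2:
  assumes A: "independent_set {1, 4, 5 * m + 2} A"
  shows "upper_density A \<le> ereal ((2 * real m + 1) / (5 * real m + 3))"
proof (rule upper_density_le_by_chunks[where T = "2 * m + 1"])
  fix a assume "a \<in> A"
  let ?b = "a + 5 * int m + 1"
  have A14: "independent_set {1, 4} A" using A by (rule independent_set_subset) auto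
  have split: "card (A \<inter> {a..<?b + 2}) = card (A \<inter> {a..<?b}) + card (A \<inter> {?b..<?b + 2})"
    by (rule card_Int_split) auto
  have pair: "card (A \<inter> {?b..<?b + 2}) = indicator A ?b + indicator A (?b + 1)"
    using card_Int_window_eq_sum[of A ?b 2] by (simp add: eval_nat_numeral lessThan_Suc)
  have "card (A \<inter> {a..<?b + 2}) \<le> 2 * m + 1"
  proof (cases "a + 5 * int m \<in> A")
    case True
    then have "?b \<notin> A" "?b + 1 \<notin> A"
      using independent_setD[OF A True, of 1] independent_setD[OF A \<open>a \<in> A\<close>, of "5 * m + 2"]
      by (simp_all add: algebra_simps)
    then show ?thesis
      using split pair card_window_5j1_le_Suc[OF A14, of a m] by simp
  next
    case False
    then have "card (A \<inter> {a..<?b}) \<le> 2 * m"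
      using card_window_5j1_le[OF A14, of a m] by simp
    then show ?thesis
      using split pair indicator_pair_le_if_independent[OF A14, of 1 ?b] by simp
  qed
  then show "\<exists>b>a. real (card (A \<inter> {a..<b})) \<le> (2 * real m + 1) / (5 * real m + 3) * of_int (b - a)
                   \<and> card (A \<inter> {a..<b}) \<le> 2 * m + 1"
    by (intro exI[of _ "?b + 2"]) (simp add: add.assoc)
qed simp

lemma card_window_5j4_le:
  assumes A: "independent_set {1, 4} A" and "a + 2 \<notin> A" "a + 5 * int j + 3 \<notin> A"
  shows "card (A \<inter> {a..<a + 5 * int j + 4}) \<le> 2 * j + 1"
proof -
  have "card (A \<inter> {a..<a + 3}) = indicator A a + indicator A (a + 1)"
    using card_Int_window_eq_sum[of A a 3] \<open>a + 2 \<notin> A\<close> by (simp add: eval_nat_numeral lessThan_Suc)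
  also have "\<dots> \<le> 1"
    using indicator_pair_le_if_independent[OF A, of 1 a] by simp
  finally have "card (A \<inter> {a..<a + 3}) \<le> 1" .
  moreover have "card (A \<inter> {a + 3..<a + 3 + 5 * int j}) \<le> 2 * j"
    by (rule card_windows5_le[OF A])
  moreover have "{a + 5 * int j + 3..<a + 5 * int j + 4} = {a + 5 * int j + 3}"
    by auto
  moreover have "card (A \<inter> {a..<a + 5 * int j + 4}) = card (A \<inter> {a..<a + 3})
      + card (A \<inter> {a + 3..<a + 3 + 5 * int j}) + card (A \<inter> {a + 5 * int j + 3..<a + 5 * int j + 4})"
    using card_Int_split[of a "a + 3" "a + 5 * int j + 4" A]
      card_Int_split[of "a + 3" "a + 5 * int j + 3" "a + 5 * int j + 4" A]
    by (simp add: algebra_simps)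
  ultimately show ?thesis
    using \<open>a + 5 * int j + 3 \<notin> A\<close> by simp
qed

text \<open>For \<open>k = 5 m + 3\<close> a window of length \<open>k + 1\<close> may hold \<open>2 m + 2\<close> elements, but then
  the three following positions are empty, so the window of length \<open>k + 4\<close> still has
  density at most \<open>(2 m + 1) / (k + 1)\<close>.\<close>

lemma card_window_mod3_le:
  assumes A: "independent_set {1, 4, 5 * m + 3} A" and "a \<in> A"
  shows "card (A \<inter> {a..<a + 5 * int m + 4}) \<le> 2 * m + 1
         \<or> card (A \<inter> {a..<a + 5 * int m + 7}) \<le> 2 * m + 2"
proof (cases "card (A \<inter> {a..<a + 5 * int m + 4}) \<le> 2 * m + 1")
  case False
  let ?b = "a + 5 * int m + 1"
  have A14: "independent_set {1, 4} A" using A by (rule independent_set_subset) auto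
  note excl = independent_setD[OF A]
  have three: "card (A \<inter> {x..<x + 3}) = indicator A x + indicator A (x + 1) + indicator A (x + 2)" for x
    using card_Int_window_eq_sum[of A x 3] by (simp add: eval_nat_numeral lessThan_Suc add_ac)
  have "a + 5 * int m + 3 \<notin> A"
    using excl[OF \<open>a \<in> A\<close>, of "5 * m + 3"] by (simp add: algebra_simps)
  then have first: "card (A \<inter> {a..<?b + 3}) = card (A \<inter> {a..<?b}) + indicator A ?b + indicator A (?b + 1)"
    using card_Int_split[of a ?b "?b + 3" A] three[of ?b] by (simp add: add.assoc)
  then have full: "card (A \<inter> {a..<?b}) = 2 * m + 1" "indicator A ?b + indicator A (?b + 1) = (1::nat)"
    using False card_window_5j1_le_Suc[OF A14, of a m] indicator_pair_le_if_independent[OF A14, of 1 ?b]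
    by (simp_all add: add.assoc)
  then have "a + 5 * int m \<in> A"
    using card_window_5j1_le[OF A14, of a m] by (cases "a + 5 * int m \<in> A") simp_all
  then have "?b \<notin> A"
    using excl[of "a + 5 * int m" 1] by simp
  then have "?b + 1 \<in> A"
    using full(2) by (cases "?b + 1 \<in> A") simp_all
  have "a + 2 \<in> A"
    using card_window_5j4_le[OF A14 _ \<open>a + 5 * int m + 3 \<notin> A\<close>] False by auto
  have "?b + 3 \<notin> A" "?b + 4 \<notin> A" "?b + 5 \<notin> A"
    using excl[OF \<open>a + 5 * int m \<in> A\<close>, of 4] excl[OF \<open>a + 2 \<in> A\<close>, of "5 * m + 3"]
      excl[OF \<open>?b + 1 \<in> A\<close>, of 4]
    by (simp_all add: algebra_simps)
  then have "card (A \<inter> {a..<?b + 6}) = card (A \<inter> {a..<?b + 3})"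
    using card_Int_split[of a "?b + 3" "?b + 6" A] three[of "?b + 3"] by (simp add: add.assoc)
  then show ?thesis
    using first full by (simp add: add.assoc)
qed simp

lemma upper_density_le_mod3:
  assumes A: "independent_set {1, 4, 5 * m + 3} A" and "m \<ge> 1"
  shows "upper_density A \<le> ereal ((2 * real m + 1) / (5 * real m + 4))"
proof (rule upper_density_le_by_chunks[where T = "2 * m + 2"])
  let ?\<rho> = "(2 * real m + 1) / (5 * real m + 4)"
  fix a assume "a \<in> A"
  have "(2 * real m + 2) * (5 * real m + 4) \<le> (2 * real m + 1) * (5 * real m + 7)"
    using \<open>m \<ge> 1\<close> by (simp add: algebra_simps)
  then have long_chunk: "2 * real m + 2 \<le> ?\<rho> * (5 * real m + 7)"
    by (simp add: field_simps)
  show "\<exists>b>a. real (card (A \<inter> {a..<b})) \<le> ?\<rho> * of_int (b - a) \<and> card (A \<inter> {a..<b}) \<le> 2 * m + 2"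
    using card_window_mod3_le[OF A \<open>a \<in> A\<close>]
  proof
    assume "card (A \<inter> {a..<a + 5 * int m + 4}) \<le> 2 * m + 1"
    then show ?thesis
      by (intro exI[of _ "a + 5 * int m + 4"]) simp
  next
    assume "card (A \<inter> {a..<a + 5 * int m + 7}) \<le> 2 * m + 2"
    then show ?thesis
      using long_chunk by (intro exI[of _ "a + 5 * int m + 7"]) simp
  qed
qed simp

section \<open>Extremal periodic sets\<close>

lemma indep_ratio_eq_periodic:
  fixes p :: int
  assumes "\<And>A. independent_set S A \<Longrightarrow> upper_density A \<le> ereal (card B / p)"
    and "p > 0" "B \<subseteq> {0..<p}" "independent_set S {x. x mod p \<in> B}"
  shows "indep_ratio S = ereal (card B / p)"
  unfolding indep_ratio_def
proof (rule antisym)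
  show "(SUP A\<in>{A. independent_set S A}. upper_density A) \<le> ereal (card B / p)"
    using assms(1) by (auto intro: SUP_least)
  show "ereal (card B / p) \<le> (SUP A\<in>{A. independent_set S A}. upper_density A)"
    using assms(4) upper_density_periodic_ge[OF assms(2,3)] by (auto intro: SUP_upper2)
qed

definition pattern_03 :: "nat \<Rightarrow> int set" where
  "pattern_03 m = {r. 0 \<le> r \<and> r \<le> 5 * int m - 2 \<and> (r mod 5 = 0 \<or> r mod 5 = 3)}"

lemma pattern_03_subset: "pattern_03 m \<subseteq> {0..<5 * int m}"
  unfolding pattern_03_def by auto

lemma finite_pattern_03: "finite (pattern_03 m)"
  using finite_subset[OF pattern_03_subset] by simp

lemma card_pattern_03: "card (pattern_03 m) = 2 * m"
proof (induction m)
  case 0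
  have "pattern_03 0 = {}" unfolding pattern_03_def by auto
  then show ?case by simp
next
  case (Suc m)
  have "pattern_03 (Suc m) = insert (5 * int m) (insert (5 * int m + 3) (pattern_03 m))"
    unfolding pattern_03_def by auto presburger+
  moreover have "5 * int m \<notin> pattern_03 m" "5 * int m + 3 \<notin> pattern_03 m"
    unfolding pattern_03_def by auto
  ultimately show ?case
    using Suc finite_pattern_03[of m] by simp
qed

lemma mod_eq_if_less_twice:
  fixes s p :: int
  assumes "0 \<le> s" "s < 2 * p"
  shows "s mod p = (if s < p then s else s - p)"
proof (cases "s < p")
  case False
  have "s mod p = (s - p) mod p" by simp
  also have "\<dots> = s - p" using False assms(2) by (intro mod_pos_pos_trivial) auto
  finally show ?thesis using False by simp
qed (use assms in simp)

lemma independent_set_periodic_mod0: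
  assumes "m \<ge> 1"
  shows "independent_set {1, 4, 5 * m} {x. x mod (5 * int m + 1) \<in> pattern_03 m}"
proof (rule independent_set_periodic)
  fix r d assume rd: "r \<in> pattern_03 m" "d \<in> {1, 4, 5 * m}"
  then have bounds: "0 \<le> r + int d" "r + int d < 2 * (5 * int m + 1)"
    unfolding pattern_03_def by auto
  then show "(r + int d) mod (5 * int m + 1) \<notin> pattern_03 m"
    unfolding mod_eq_if_less_twice[OF bounds]
    using rd assms unfolding pattern_03_def by auto presburger+
qed simp

lemma independent_set_periodic_mod2:
  assumes "m \<ge> 1"
  shows "independent_set {1, 4, 5 * m + 2} {x. x mod (5 * int m + 3) \<in> insert (5 * int m) (pattern_03 m)}"
proof (rule independent_set_periodic)
  fix r d assume rd: "r \<in> insert (5 * int m) (pattern_03 m)" "d \<in> {1, 4, 5 * m + 2}"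
  then have bounds: "0 \<le> r + int d" "r + int d < 2 * (5 * int m + 3)"
    unfolding pattern_03_def by auto
  then show "(r + int d) mod (5 * int m + 3) \<notin> insert (5 * int m) (pattern_03 m)"
    unfolding mod_eq_if_less_twice[OF bounds]
    using rd assms unfolding pattern_03_def by auto presburger+
qed simp

lemma independent_set_periodic_mod3:
  assumes "m \<ge> 1"
  shows "independent_set {1, 4, 5 * m + 3} {x. x mod (5 * int m + 4) \<in> insert (5 * int m + 1) (pattern_03 m)}"
proof (rule independent_set_periodic)
  fix r d assume rd: "r \<in> insert (5 * int m + 1) (pattern_03 m)" "d \<in> {1, 4, 5 * m + 3}"
  then have bounds: "0 \<le> r + int d" "r + int d < 2 * (5 * int m + 4)"
    unfolding pattern_03_def by auto
  then show "(r + int d) mod (5 * int m + 4) \<notin> insert (5 * int m + 1) (pattern_03 m)"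
    unfolding mod_eq_if_less_twice[OF bounds]
    using rd assms unfolding pattern_03_def by auto presburger+
qed simp

lemma independent_set_periodic_mod14:
  assumes "k mod 5 = 1 \<or> k mod 5 = 4"
  shows "independent_set {1, 4, k} {x. x mod 5 \<in> {0, 2}}"
proof (rule independent_set_periodic)
  fix r d assume "r \<in> {0, 2::int}" "d \<in> {1, 4, k}"
  then have "r = 0 \<or> r = 2" "int d mod 5 = 1 \<or> int d mod 5 = 4"
    using assms zmod_int[of k 5] by auto
  then show "(r + int d) mod 5 \<notin> {0, 2}"
    using mod_add_right_eq[of r "int d" 5, symmetric] by auto
qed simp

lemma indep_ratio_mod0:
  assumes "m \<ge> 1"
  shows "indep_ratio {1, 4, 5 * m} = ereal (2 * real m / (5 * real m + 1))"
proof -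
  have sub: "pattern_03 m \<subseteq> {0..<5 * int m + 1}"
    using pattern_03_subset[of m] by auto
  have "indep_ratio {1, 4, 5 * m} = ereal (card (pattern_03 m) / (5 * int m + 1))"
  proof (rule indep_ratio_eq_periodic[OF _ _ sub independent_set_periodic_mod0[OF assms]])
    show "upper_density A \<le> ereal (card (pattern_03 m) / (5 * int m + 1))"
      if "independent_set {1, 4, 5 * m} A" for A
      using upper_density_le_mod0[OF that] by (simp add: card_pattern_03)
  qed simp
  then show ?thesis by (simp add: card_pattern_03)
qed

lemma indep_ratio_mod2:
  assumes "m \<ge> 1"
  shows "indep_ratio {1, 4, 5 * m + 2} = ereal ((2 * real m + 1) / (5 * real m + 3))"
proof -
  let ?B = "insert (5 * int m) (pattern_03 m)"
  have "5 * int m \<notin> pattern_03 m"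
    using pattern_03_subset[of m] by auto
  then have card: "card ?B = 2 * m + 1"
    using finite_pattern_03[of m] by (simp add: card_pattern_03)
  have sub: "?B \<subseteq> {0..<5 * int m + 3}"
    using pattern_03_subset[of m] by auto
  have "indep_ratio {1, 4, 5 * m + 2} = ereal (card ?B / (5 * int m + 3))"
  proof (rule indep_ratio_eq_periodic[OF _ _ sub independent_set_periodic_mod2[OF assms]])
    show "upper_density A \<le> ereal (card ?B / (5 * int m + 3))"
      if "independent_set {1, 4, 5 * m + 2} A" for A
      unfolding card using upper_density_le_mod2[OF that] by (simp add: add.commute)
  qed simp
  then show ?thesis by (simp add: card)
qed

lemma indep_ratio_mod3:
  assumes "m \<ge> 1"
  shows "indep_ratio {1, 4, 5 * m + 3} = ereal ((2 * real m + 1) / (5 * real m + 4))"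
proof -
  let ?B = "insert (5 * int m + 1) (pattern_03 m)"
  have "5 * int m + 1 \<notin> pattern_03 m"
    using pattern_03_subset[of m] by auto
  then have card: "card ?B = 2 * m + 1"
    using finite_pattern_03[of m] by (simp add: card_pattern_03)
  have sub: "?B \<subseteq> {0..<5 * int m + 4}"
    using pattern_03_subset[of m] by auto
  have "indep_ratio {1, 4, 5 * m + 3} = ereal (card ?B / (5 * int m + 4))"
  proof (rule indep_ratio_eq_periodic[OF _ _ sub independent_set_periodic_mod3[OF assms]])
    show "upper_density A \<le> ereal (card ?B / (5 * int m + 4))"
      if "independent_set {1, 4, 5 * m + 3} A" for A
      unfolding card using upper_density_le_mod3[OF that assms] by (simp add: add.commute)
  qed simp
  then show ?thesis by (simp add: card)
qed

lemma indep_ratio_mod14: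
  assumes "k mod 5 = 1 \<or> k mod 5 = 4"
  shows "indep_ratio {1, 4, k} = ereal (2 / 5)"
proof -
  have "indep_ratio {1, 4, k} = ereal (card {0, 2::int} / real_of_int 5)"
  proof (rule indep_ratio_eq_periodic[OF _ _ _ independent_set_periodic_mod14[OF assms]])
    show "upper_density A \<le> ereal (card {0, 2::int} / real_of_int 5)" if "independent_set {1, 4, k} A" for A
      using upper_density_le_two_fifths[OF independent_set_subset[OF that]] by simp
  qed auto
  then show ?thesis by simp
qed

theorem theorem32:
  fixes k :: nat
  assumes "k > 4"
  shows "indep_ratio {1, 4, k} =
    ereal (if k mod 5 = 0 then 2 * real k / (5 * real k + 5)
           else if k mod 5 = 1 then 2 / 5
           else if k mod 5 = 2 then (2 * real k + 1) / (5 * real k + 5)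
           else if k mod 5 = 3 then (2 * real k - 1) / (5 * real k + 5)
           else 2 / 5)"
proof -
  define m where "m = k div 5"
  have m: "m \<ge> 1" using assms by (simp add: m_def)
  have "k = 5 * m \<or> k mod 5 = 1 \<or> k mod 5 = 4 \<or> k = 5 * m + 2 \<or> k = 5 * m + 3"
    unfolding m_def by presburger
  then consider "k = 5 * m" | "k mod 5 = 1 \<or> k mod 5 = 4" | "k = 5 * m + 2" | "k = 5 * m + 3"
    by blast
  then show ?thesis
  proof cases
    case 1
    then show ?thesis using indep_ratio_mod0[OF m] by (simp add: field_simps)
  next
    case 2
    then show ?thesis using indep_ratio_mod14 by auto
  next
    case 3
    moreover have "k mod 5 = 2" using 3 by presburger
    ultimately show ?thesis using indep_ratio_mod2[OF m] by (simp add: field_simps)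
  next
    case 4
    then show ?thesis using indep_ratio_mod3[OF m] by (simp add: field_simps)
  qed
qed

end
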